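(* Let $q$ be a prime power, let $n \le m$ and $1 \le k \le n$ be integers, and let $\mathcal G(n,k)$ be a Gabidulin code of length $n$ and dimension $k$ over $\mathbb F_{q^m}$, with minimum rank distance $d = n-k+1$. Let $\tau$ be an integer with $0 \le \tau < d$. Then there exists a word $\mathbf r \in \mathbb F_{q^m}^n$ such that $$\ell \;\ge\; \left|\mathcal B_{\tau}(\mathbf r) \cap \mathcal G(n,k)\right| \;\ge\; \frac{\left[\begin{smallmatrix} n \\ n-\tau\end{smallmatrix}\right]_q}{(q^m)^{n-\tau-k}} \;\ge\; q^m\, q^{\tau(m+n) - \tau^2 - md},$$ where $\ell = \max_{\mathbf r' \in \mathbb F_{q^m}^n} |\mathcal B_\tau(\mathbf r') \cap \mathcal G(n,k)|$. In particular, for $n = m$: $\ell \ge q^n q^{2n\tau - \tau^2 - nd}$.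
   Context: For $x \in \mathbb F_{q^m}$ write $x^{[i]} = x^{q^i}$. A linearized polynomial over $\mathbb F_{q^m}$ is $f(x) = \sum_{i=0}^{d_f} f_i x^{[i]}$ with $f_i \in \mathbb F_{q^m}$; if $f_{d_f} \ne 0$, $d_f$ is its $q$-degree. A Gabidulin code $\mathcal G(n,k)$ of length $n \le m$ and dimension $k$ over $\mathbb F_{q^m}$ is the set $\{(f(\alpha_0), \dots, f(\alpha_{n-1})) : f \text{ linearized over } \mathbb F_{q^m},\ \deg_q f < k\}$, where $\alpha_0,\dots,\alpha_{n-1} \in \mathbb F_{q^m}$ are fixed and linearly independent over $\mathbb F_q$. Fixing a basis of $\mathbb F_{q^m}$ over $\mathbb F_q$, each vector $\mathbf x \in \mathbb F_{q^m}^n$ corresponds to a matrix $\mathbf X \in \mathbb F_q^{m \times n}$, and $\mathrm{rank}(\mathbf x)$ is the rank of $\mathbf X$ over $\mathbb F_q$; the rank distance between $\mathbf x,\mathbf y$ is $\mathrm{rank}(\mathbf x - \mathbf y)$. The minimum rank distance of the Gabidulin code is $d = n-k+1$. $\mathcal B_\tau(\mathbf a)$ denotes the set of $\mathbf x \in \mathbb F_{q^m}^n$ with $\mathrm{rank}(\mathbf x - \mathbf a) \le \tau$. The Gaussian binomial is $\left[\begin{smallmatrix} n \\ s\end{smallmatrix}\right]_q = \prod_{i=0}^{s-1} \frac{q^n - q^i}{q^s - q^i}$, the number of $s$-dimensional subspaces of an $n$-dimensional $\mathbb F_q$-vector space. *)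

theory Defs
  imports Complex_Main "HOL-Computational_Algebra.Primes"
begin

text \<open>The ambient field F_{q^m} is a finite field type 'a with CARD('a) = q^m.\<close>

definition Fq :: "nat \<Rightarrow> ('a::{finite,field}) set" where
  "Fq q = {x. x ^ q = x}"

definition frob :: "nat \<Rightarrow> nat \<Rightarrow> 'a::{finite,field} \<Rightarrow> 'a" where
  "frob q i x = x ^ (q ^ i)"

definition lin_indep_Fq :: "nat \<Rightarrow> nat set \<Rightarrow> (nat \<Rightarrow> 'a::{finite,field}) \<Rightarrow> bool" where
  "lin_indep_Fq q S v \<longleftrightarrow>
     (\<forall>c. (\<forall>i\<in>S. c i \<in> Fq q) \<longrightarrow> (\<Sum>i\<in>S. c i * v i) = 0 \<longrightarrow> (\<forall>i\<in>S. c i = 0))"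

definition words :: "nat \<Rightarrow> (nat \<Rightarrow> 'a::{finite,field}) set" where
  "words n = {x. \<forall>i\<ge>n. x i = 0}"

text \<open>Rank of a word over F_q: the rank of its m x n matrix over F_q, i.e. the maximal
  number of F_q-linearly independent columns (entries).\<close>
definition rank_q :: "nat \<Rightarrow> nat \<Rightarrow> (nat \<Rightarrow> 'a::{finite,field}) \<Rightarrow> nat" where
  "rank_q q n x = Max {card S | S. S \<subseteq> {..<n} \<and> lin_indep_Fq q S x}"

definition lin_poly_eval :: "nat \<Rightarrow> nat \<Rightarrow> (nat \<Rightarrow> 'a::{finite,field}) \<Rightarrow> 'a \<Rightarrow> 'a" where
  "lin_poly_eval q k f x = (\<Sum>i<k. f i * frob q i x)"

definition gabidulin :: "nat \<Rightarrow> nat \<Rightarrow> nat \<Rightarrow> (nat \<Rightarrow> 'a::{finite,field}) \<Rightarrow> (nat \<Rightarrow> 'a) set" where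
  "gabidulin q n k \<alpha> =
     {(\<lambda>j. if j < n then lin_poly_eval q k f (\<alpha> j) else 0) | f. True}"

definition rank_ball :: "nat \<Rightarrow> nat \<Rightarrow> nat \<Rightarrow> (nat \<Rightarrow> 'a::{finite,field}) \<Rightarrow> (nat \<Rightarrow> 'a) set" where
  "rank_ball q n \<tau> a = {x \<in> words n. rank_q q n (x - a) \<le> \<tau>}"

definition gauss_binom :: "nat \<Rightarrow> nat \<Rightarrow> nat \<Rightarrow> real" where
  "gauss_binom q n s = (\<Prod>i<s. (real q ^ n - real q ^ i) / (real q ^ s - real q ^ i))"

end

theory Submission
  imports Defs "HOL-Number_Theory.Residues" "HOL-Computational_Algebra.Polynomial"
    "HOL-Library.FuncSet"
begin

text \<open>
  Put s = n - tau and let V be the F_q-span of the evaluation points. Each s-dimensional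
  subspace U of V is the root space of a monic linearized polynomial
  P(x) = x^[s] + sum_{i<s} p_i x^[i]; counting ordered bases of V and of root spaces shows that
  at least [n choose s]_q such polynomials arise. By pigeonhole on the coefficients
  p_k, ..., p_{s-1}, at least [n choose s]_q / q^(m(s-k)) of them share their high part h. Take
  r_j = -(h(alpha_j) + alpha_j^[s]): for each such P the low part f = sum_{i<k} p_i x^[i] is a
  codeword with f(alpha) - r = P(alpha), and this word has rank at most n - s = tau because P
  vanishes on the s-dimensional subspace U of V. Distinct P give distinct codewords, since a
  nonzero linearized polynomial of q-degree below k cannot vanish on the n independent
  alpha_j. Finally [n choose s]_q >= q^(s(n-s)).
\<close>

section \<open>Counting lemmas and finite fields\<close>

lemma ex_large_fiber:
  assumes "finite B" and "f ` A \<subseteq> B"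
  shows "\<exists>b. card A \<le> card B * card {x \<in> A. f x = b}"
proof (cases "B = {}")
  case False
  define M where "M = Max ((\<lambda>b. card {x \<in> A. f x = b}) ` B)"
  have "M \<in> (\<lambda>b. card {x \<in> A. f x = b}) ` B"
    unfolding M_def using assms(1) False by (intro Max_in) auto
  then obtain b where b: "card {x \<in> A. f x = b} = M" by auto
  have "A = (\<Union>b\<in>B. {x \<in> A. f x = b})" using assms(2) by auto
  then have "card A \<le> (\<Sum>b\<in>B. card {x \<in> A. f x = b})"
    using card_UN_le[OF assms(1)] by metis
  also have "\<dots> \<le> (\<Sum>b\<in>B. M)"
    by (rule sum_mono) (use assms(1) in \<open>auto simp: M_def\<close>)
  finally show ?thesis using b by auto
qed (use assms in auto)

lemma card_le_card_range_times_kernel: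
  fixes f :: "'a::{finite,ab_group_add} \<Rightarrow> 'b::ab_group_add"
  assumes f_diff: "\<And>x y. f (x - y) = f x - f y"
  shows "card (UNIV :: 'a set) \<le> card (range f) * card {x. f x = 0}"
proof -
  obtain b where b: "card (UNIV :: 'a set) \<le> card (range f) * card {x. f x = b}"
    using ex_large_fiber[of "range f" f UNIV] by auto
  have "card {x. f x = b} \<le> card {x. f x = 0}"
  proof (cases "\<exists>x0. f x0 = b")
    case True
    then obtain x0 where "f x0 = b" by blast
    then have "(\<lambda>x. x - x0) ` {x. f x = b} \<subseteq> {x. f x = 0}" by (auto simp: f_diff)
    moreover have "inj (\<lambda>x::'a. x - x0)" by (auto intro: injI)
    ultimately show ?thesis by (metis card_image card_mono finite inj_on_subset subset_UNIV)
  qed simp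
  then show ?thesis using b by (meson le_trans mult_le_mono2)
qed

text \<open>The library version finite_field_power_card_eq_same needs the class finite_field;
  here only the sort finite, field is available, so we go through Lagrange's theorem.\<close>

lemma finite_field_power_card_eq_self:
  fixes x :: "'a::{finite,field}"
  shows "x ^ card (UNIV :: 'a set) = x"
proof (cases "x = 0")
  case False
  define G :: "'a monoid" where "G = \<lparr>carrier = UNIV - {0}, monoid.mult = (*), one = 1\<rparr>"
  interpret group G
    by (rule groupI) (auto simp: G_def mult.assoc intro!: bexI[of _ "inverse x" for x])
  have pow: "x [^]\<^bsub>G\<^esub> i = x ^ i" for i :: nat
    by (induction i) (simp_all add: G_def)
  have "Coset.order G = card (UNIV :: 'a set) - 1"
    by (simp add: Coset.order_def G_def card_Diff_singleton)
  then have "x ^ (card (UNIV :: 'a set) - 1) = 1"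
    using pow_order_eq_1[of x] False pow[of "card (UNIV :: 'a set) - 1"] by (simp add: G_def)
  moreover have "card (UNIV :: 'a set) = Suc (card (UNIV :: 'a set) - 1)"
    using finite_UNIV_card_ge_0[where 'a = 'a] by simp
  ultimately show ?thesis
    by (metis power_Suc mult.right_neutral)
qed (use finite_UNIV_card_ge_0[where 'a = 'a] in auto)

section \<open>Gaussian binomial coefficients\<close>

lemma gauss_binom_le_of_prod_le:
  assumes q: "2 \<le> q" and "s \<le> n"
    and le: "(\<Prod>i<s. q ^ n - q ^ i) \<le> N * (\<Prod>i<s. q ^ s - q ^ i)"
  shows "gauss_binom q n s \<le> real N"
proof -
  have num: "real (\<Prod>i<s. q ^ n - q ^ i) = (\<Prod>i<s. real q ^ n - real q ^ i)"
    using \<open>s \<le> n\<close> q by (simp add: of_nat_diff)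
  have den: "real (\<Prod>i<s. q ^ s - q ^ i) = (\<Prod>i<s. real q ^ s - real q ^ i)"
    using q by (simp add: of_nat_diff)
  have den_pos: "(\<Prod>i<s. real q ^ s - real q ^ i) > 0"
    using q by (intro prod_pos) (simp add: power_strict_increasing)
  have "gauss_binom q n s = (\<Prod>i<s. real q ^ n - real q ^ i) / (\<Prod>i<s. real q ^ s - real q ^ i)"
    unfolding gauss_binom_def by (rule prod_dividef)
  also have "\<dots> \<le> real N"
  proof -
    have "real (\<Prod>i<s. q ^ n - q ^ i) \<le> real N * real (\<Prod>i<s. q ^ s - q ^ i)"
      using le by (metis of_nat_le_iff of_nat_mult)
    then show ?thesis using num den den_pos by (simp add: divide_le_eq)
  qed
  finally show ?thesis .
qed

lemma gauss_binom_ge_power: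
  assumes q: "2 \<le> q" and "s \<le> n"
  shows "real q ^ (s * (n - s)) \<le> gauss_binom q n s"
proof -
  define x where "x = real q"
  have x1: "1 \<le> x" using q by (simp add: x_def)
  have "real q ^ (s * (n - s)) = (\<Prod>i<s. x ^ (n - s))"
    by (simp add: x_def power_mult[symmetric] mult.commute)
  also have "\<dots> \<le> (\<Prod>i<s. (x ^ n - x ^ i) / (x ^ s - x ^ i))"
  proof (rule prod_mono)
    fix i assume i: "i \<in> {..<s}"
    have pos: "x ^ s - x ^ i > 0" using i q by (simp add: x_def power_strict_increasing)
    have "x ^ i \<le> x ^ (n - s) * x ^ i" using x1 by simp
    then have "x ^ (n - s) * (x ^ s - x ^ i) \<le> x ^ n - x ^ i"
      using \<open>s \<le> n\<close> by (simp add: right_diff_distrib power_add[symmetric])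
    then show "0 \<le> x ^ (n - s) \<and> x ^ (n - s) \<le> (x ^ n - x ^ i) / (x ^ s - x ^ i)"
      using pos x1 by (simp add: le_divide_eq mult.commute)
  qed
  finally show ?thesis by (simp add: gauss_binom_def x_def)
qed

lemma gauss_quotient_ge_power:
  assumes q: "2 \<le> q" and "k \<le> n" and "\<tau> \<le> n - k"
  shows "real q ^ m * real q powi (int \<tau> * (int m + int n) - int \<tau> ^ 2 - int m * int (n - k + 1))
         \<le> gauss_binom q n (n - \<tau>) / (real q ^ m) ^ (n - \<tau> - k)"
proof -
  define s where "s = n - \<tau>"
  have "k \<le> s" "s \<le> n" "n - s = \<tau>" using assms by (auto simp: s_def)
  have e1: "int (s * (n - s)) = int s * int \<tau>" and e2: "int (m * (s - k)) = int m * (int s - int k)"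
    and e3: "int s = int n - int \<tau>" and e4: "int (n - k + 1) = int n - int k + 1"
    using \<open>k \<le> s\<close> \<open>s \<le> n\<close> \<open>n - s = \<tau>\<close> \<open>k \<le> n\<close> by (simp_all add: s_def of_nat_diff)
  have exponent: "int \<tau> * (int m + int n) - int \<tau> ^ 2 - int m * int (n - k + 1) + int m
        = int (s * (n - s)) - int (m * (s - k))"
    unfolding e1 e2 e3 e4 by (simp add: algebra_simps power2_eq_square)
  have q0: "real q \<noteq> 0" using q by simp
  have "real q ^ m * real q powi (int \<tau> * (int m + int n) - int \<tau> ^ 2 - int m * int (n - k + 1))
      = real q powi (int \<tau> * (int m + int n) - int \<tau> ^ 2 - int m * int (n - k + 1) + int m)"
    using q0 by (simp add: power_int_add)
  also have "\<dots> = real q powi (int (s * (n - s)) - int (m * (s - k)))"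
    by (simp only: exponent)
  also have "\<dots> = real q ^ (s * (n - s)) / real q ^ (m * (s - k))"
    using q0 by (simp only: power_int_diff power_int_of_nat simp_thms)
  also have "\<dots> = real q ^ (s * (n - s)) / (real q ^ m) ^ (s - k)"
    by (simp add: power_mult)
  also have "\<dots> \<le> gauss_binom q n s / (real q ^ m) ^ (s - k)"
    using gauss_binom_ge_power[OF q \<open>s \<le> n\<close>] by (simp add: divide_right_mono)
  finally show ?thesis by (simp add: s_def)
qed

section \<open>Linearized polynomials\<close>

lemma card_lin_poly_roots_le:
  fixes c :: "nat \<Rightarrow> 'a::{finite,field}"
  assumes q: "2 \<le> q" and j: "j < d" "c j \<noteq> 0"
  shows "card {x. lin_poly_eval q d c x = 0} \<le> q ^ (d - 1)"
proof -
  define P where "P = (\<Sum>i<d. monom (c i) (q ^ i))"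
  have eval: "poly P x = lin_poly_eval q d c x" for x
    unfolding P_def lin_poly_eval_def frob_def by (simp add: poly_sum poly_monom)
  have "coeff P (q ^ j) = (\<Sum>i<d. if i = j then c i else 0)"
    unfolding P_def coeff_sum using q by (intro sum.cong refl) simp
  also have "\<dots> = c j" using j by simp
  finally have "P \<noteq> 0" using j by auto
  have "degree P \<le> q ^ (d - 1)"
    unfolding P_def
  proof (rule degree_sum_le)
    fix i assume "i \<in> {..<d}"
    then have "q ^ i \<le> q ^ (d - 1)" using q by (intro power_increasing) auto
    then show "degree (monom (c i) (q ^ i)) \<le> q ^ (d - 1)"
      using degree_monom_le order_trans by blast
  qed simp
  moreover have "card {x. poly P x = 0} \<le> degree P"
    using \<open>P \<noteq> 0\<close> by (rule card_poly_roots_bound)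
  ultimately show ?thesis by (simp add: eval)
qed

lemma lin_poly_eval_Suc:
  "lin_poly_eval q (Suc d) c x = lin_poly_eval q d c x + c d * frob q d x"
  by (simp add: lin_poly_eval_def)

lemma lin_poly_eval_coeff_diff:
  "lin_poly_eval q d (\<lambda>i. c i - c' i) x = lin_poly_eval q d c x - lin_poly_eval q d c' x"
  by (simp add: lin_poly_eval_def sum_subtractf left_diff_distrib)

lemma lin_poly_eval_split:
  assumes "k \<le> s"
  shows "lin_poly_eval q s p x = lin_poly_eval q k p x + lin_poly_eval q s (\<lambda>i. if k \<le> i then p i else 0) x"
proof -
  have "lin_poly_eval q s p x
      = (\<Sum>i<s. (if i < k then p i * frob q i x else 0) + (if k \<le> i then p i else 0) * frob q i x)"
    unfolding lin_poly_eval_def by (intro sum.cong) auto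
  also have "\<dots> = (\<Sum>i\<in>{..<s} \<inter> {..<k}. p i * frob q i x)
      + lin_poly_eval q s (\<lambda>i. if k \<le> i then p i else 0) x"
    by (simp add: sum.distrib sum.inter_restrict lin_poly_eval_def lessThan_def)
  also have "{..<s} \<inter> {..<k} = {..<k}" using assms by auto
  finally show ?thesis by (simp add: lin_poly_eval_def)
qed

section \<open>Linear algebra over the subfield F_q\<close>

lemma words_eq_image:
  "words t = (\<lambda>u i. if i < t then u i else 0) ` PiE {..<t} (\<lambda>_. UNIV :: 'a::{finite,field} set)"
proof
  show "words t \<subseteq> (\<lambda>u i. if i < t then u i else 0) ` PiE {..<t} (\<lambda>_. UNIV :: 'a set)"
  proof
    fix u :: "nat \<Rightarrow> 'a" assume "u \<in> words t"
    then have "u = (\<lambda>i. if i < t then restrict u {..<t} i else 0)"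
      by (auto simp: words_def fun_eq_iff)
    moreover have "restrict u {..<t} \<in> PiE {..<t} (\<lambda>_. UNIV)" by simp
    ultimately show "u \<in> (\<lambda>u i. if i < t then u i else 0) ` PiE {..<t} (\<lambda>_. UNIV)"
      by (rule image_eqI)
  qed
  show "(\<lambda>u i. if i < t then u i else 0) ` PiE {..<t} (\<lambda>_. UNIV :: 'a set) \<subseteq> words t"
    unfolding words_def by (rule image_subsetI) simp
qed

lemma finite_words: "finite (words t :: (nat \<Rightarrow> 'a::{finite,field}) set)"
  unfolding words_eq_image by (intro finite_imageI finite_PiE) auto

lemma sum_lessThan_Suc_fun_upd:
  fixes f w :: "nat \<Rightarrow> 'a::comm_semiring_0"
  shows "(\<Sum>j<Suc t. (f(t := a)) j * w j) = (\<Sum>j<t. f j * w j) + a * w t"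
proof -
  have "(\<Sum>j<t. (f(t := a)) j * w j) = (\<Sum>j<t. f j * w j)" by (intro sum.cong) auto
  then show ?thesis by simp
qed

lemma lin_indep_Fq_cong:
  assumes "\<And>i. i \<in> I \<Longrightarrow> v i = w i"
  shows "lin_indep_Fq q I v = lin_indep_Fq q I w"
proof -
  have "(\<Sum>i\<in>I. c i * v i) = (\<Sum>i\<in>I. c i * w i)" for c using assms by (intro sum.cong) auto
  then show ?thesis by (simp add: lin_indep_Fq_def)
qed

lemma rank_q_le:
  assumes "\<And>S. S \<subseteq> {..<n} \<Longrightarrow> lin_indep_Fq q S x \<Longrightarrow> card S \<le> b"
  shows "rank_q q n x \<le> b"
proof -
  define R where "R = {card S | S. S \<subseteq> {..<n} \<and> lin_indep_Fq q S x}"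
  have "R \<subseteq> card ` Pow {..<n}" by (auto simp: R_def)
  then have "finite R" by (rule finite_subset) simp
  moreover have "0 \<in> R"
    unfolding R_def by (intro CollectI exI[of _ "{}"]) (simp add: lin_indep_Fq_def)
  ultimately show ?thesis
    using assms unfolding rank_q_def R_def[symmetric] by (subst Max_le_iff) (auto simp: R_def)
qed

text \<open>K stands for the subfield F_q; it is a parameter so that the locale fixes the field type 'a.\<close>

locale Fq_extension =
  fixes q m :: nat and K :: "'a::{finite,field} set"
  assumes K_def: "K = Fq q"
    and prime_power: "\<exists>p e. prime p \<and> 1 \<le> e \<and> q = p ^ e"
    and card_UNIV: "card (UNIV :: 'a set) = q ^ m"
begin

lemma q_ge_2: "2 \<le> q"
proof -
  obtain p e where "prime p" "1 \<le> e" "q = p ^ e" using prime_power by blast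
  then have "p \<le> q" using prime_ge_1_nat[of p] by (simp add: self_le_power)
  then show ?thesis using prime_ge_2_nat[OF \<open>prime p\<close>] by simp
qed

lemma power_q_add: "(x + y) ^ q = x ^ q + y ^ q" for x y :: 'a
proof -
  obtain p e where p: "prime p" "q = p ^ e" using prime_power by blast
  have char_prime: "prime CHAR('a)"
    by (rule prime_CHAR_semidom) (simp add: finite_imp_CHAR_pos)
  have "CHAR('a) dvd p ^ (e * m)"
    using CHAR_dvd_CARD[where 'a = 'a] card_UNIV p(2) by (simp add: power_mult)
  then have "CHAR('a) = p"
    using char_prime p(1) prime_dvd_power primes_dvd_imp_eq by blast
  then show ?thesis using freshmans_dream'[OF char_prime, of q e] p(2) by simp
qed

lemma frob_Suc: "frob q (Suc i) x = frob q i x ^ q" for x :: 'a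
  by (simp add: frob_def power_mult[symmetric] mult.commute)

lemma frob_add: "frob q i (x + y) = frob q i x + frob q i y" for x y :: 'a
  by (induction i) (simp_all add: frob_Suc power_q_add, simp add: frob_def)

lemma frob_0: "frob q i (0 :: 'a) = 0"
  using q_ge_2 by (simp add: frob_def)

lemma frob_minus: "frob q i (- x) = - frob q i x" for x :: 'a
  using frob_add[of i x "- x"] by (simp add: frob_0 eq_neg_iff_add_eq_0 add.commute)

lemma frob_diff: "frob q i (x - y) = frob q i x - frob q i y" for x y :: 'a
  using frob_add[of i x "- y"] by (simp add: frob_minus)

lemma frob_sum: "frob q i (\<Sum>j\<in>J. f j) = (\<Sum>j\<in>J. frob q i (f j))" for f :: "'b \<Rightarrow> 'a"
  by (induction J rule: infinite_finite_induct) (simp_all add: frob_0 frob_add)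

lemma frob_mult: "frob q i (x * y) = frob q i x * frob q i y" for x y :: 'a
  by (simp add: frob_def power_mult_distrib)

lemma K_iff: "c \<in> K \<longleftrightarrow> c ^ q = c"
  by (simp add: K_def Fq_def)

lemma frob_K: "c \<in> K \<Longrightarrow> frob q i c = c"
  by (induction i) (simp_all add: frob_Suc K_iff, simp add: frob_def)

lemma K_0 [simp]: "0 \<in> K"
  using q_ge_2 by (simp add: K_iff)

lemma K_1 [simp]: "1 \<in> K"
  by (simp add: K_iff)

lemma K_add: "c \<in> K \<Longrightarrow> d \<in> K \<Longrightarrow> c + d \<in> K"
  by (simp add: K_iff power_q_add)

lemma K_minus: "c \<in> K \<Longrightarrow> - c \<in> K"
  using frob_minus[of 1 c] by (simp add: K_iff frob_def)

lemma K_diff: "c \<in> K \<Longrightarrow> d \<in> K \<Longrightarrow> c - d \<in> K"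
  using K_add[OF _ K_minus] by simp

lemma K_mult: "c \<in> K \<Longrightarrow> d \<in> K \<Longrightarrow> c * d \<in> K"
  by (simp add: K_iff power_mult_distrib)

lemma K_divide: "c \<in> K \<Longrightarrow> d \<in> K \<Longrightarrow> c / d \<in> K"
  by (simp add: K_iff power_divide)

lemma lin_poly_eval_add:
  "lin_poly_eval q d c (x + y) = lin_poly_eval q d c x + lin_poly_eval q d c y" for x y :: 'a
  by (simp add: lin_poly_eval_def frob_add distrib_left sum.distrib)

lemma lin_poly_eval_0: "lin_poly_eval q d c (0 :: 'a) = 0"
  by (simp add: lin_poly_eval_def frob_0)

lemma lin_poly_eval_K_mult: "a \<in> K \<Longrightarrow> lin_poly_eval q d c (a * x) = a * lin_poly_eval q d c x"
  by (simp add: lin_poly_eval_def frob_mult frob_K sum_distrib_left mult_ac)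

lemma lin_poly_eval_K_comb:
  assumes a: "\<And>j. j \<in> J \<Longrightarrow> a j \<in> K"
  shows "lin_poly_eval q d c (\<Sum>j\<in>J. a j * v j) = (\<Sum>j\<in>J. a j * lin_poly_eval q d c (v j))"
proof -
  have "lin_poly_eval q d c (\<Sum>j\<in>J. a j * v j) = (\<Sum>i<d. \<Sum>j\<in>J. c i * (a j * frob q i (v j)))"
    unfolding lin_poly_eval_def
    by (intro sum.cong refl) (simp add: frob_sum frob_mult frob_K a sum_distrib_left)
  also have "\<dots> = (\<Sum>j\<in>J. a j * lin_poly_eval q d c (v j))"
    by (subst sum.swap) (simp add: lin_poly_eval_def sum_distrib_left mult_ac)
  finally show ?thesis .
qed

lemma m_gt_0: "0 < m"
proof (rule ccontr)
  assume "\<not> 0 < m"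
  then obtain z :: 'a where "UNIV = {z}" using card_UNIV card_1_singletonE by auto
  then show False by (metis UNIV_I singletonD zero_neq_one)
qed

lemma card_K_le: "card K \<le> q"
proof -
  define c :: "nat \<Rightarrow> 'a" where "c = (\<lambda>i. if i = 0 then -1 else 1)"
  have "K = {x. lin_poly_eval q 2 c x = 0}"
    by (auto simp: K_iff lin_poly_eval_def frob_def c_def numeral_2_eq_2)
  then show ?thesis
    using card_lin_poly_roots_le[OF q_ge_2, of 1 2 c] by (simp add: c_def)
qed

lemma trace_frob_minus_self: "lin_poly_eval q m (\<lambda>_. 1) (frob q 1 x - x) = 0" for x :: 'a
proof -
  have "lin_poly_eval q m (\<lambda>_. 1) (frob q 1 x - x) = (\<Sum>i<m. frob q (Suc i) x - frob q i x)"
    unfolding lin_poly_eval_def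
    by (intro sum.cong refl) (simp add: frob_diff, simp add: frob_def flip: power_mult)
  also have "\<dots> = x ^ (q ^ m) - x"
    using sum_lessThan_telescope[of "\<lambda>i. frob q i x" m] by (simp add: frob_def)
  finally show ?thesis
    using finite_field_power_card_eq_self[of x] card_UNIV by simp
qed

text \<open>The kernel of T x = x^q - x is K, and T maps into the roots of the trace
  sum_{i<m} x^[i], of which there are at most q^(m-1).\<close>

lemma card_K_ge: "q \<le> card K"
proof -
  define T :: "'a \<Rightarrow> 'a" where "T x = frob q 1 x - x" for x
  have "card (range T) \<le> card {y :: 'a. lin_poly_eval q m (\<lambda>_. 1) y = 0}"
    using trace_frob_minus_self by (auto simp: T_def intro!: card_mono)
  also have "\<dots> \<le> q ^ (m - 1)"
    using m_gt_0 by (intro card_lin_poly_roots_le[OF q_ge_2, of 0]) auto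
  finally have range_T: "card (range T) \<le> q ^ (m - 1)" .
  have "{x. T x = 0} = K" by (auto simp: T_def K_iff frob_def)
  then have "q ^ m \<le> card (range T) * card K"
    using card_le_card_range_times_kernel[of T] card_UNIV by (simp add: T_def frob_diff)
  also have "\<dots> \<le> q ^ (m - 1) * card K" using range_T by simp
  finally have "q ^ (m - 1) * q \<le> q ^ (m - 1) * card K"
    using m_gt_0 by (metis power_minus_mult)
  then show ?thesis using q_ge_2 by simp
qed

lemma card_K: "card K = q"
  using card_K_le card_K_ge by (rule antisym)

definition K_span :: "(nat \<Rightarrow> 'a) \<Rightarrow> nat set \<Rightarrow> 'a set" where
  "K_span v I = {\<Sum>i\<in>I. c i * v i | c. \<forall>i\<in>I. c i \<in> K}"

definition K_subspace :: "'a set \<Rightarrow> bool" where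
  "K_subspace V \<longleftrightarrow> 0 \<in> V \<and> (\<forall>c\<in>K. \<forall>x\<in>V. \<forall>y\<in>V. c * x + y \<in> V)"

lemma lin_indep_FqD:
  "lin_indep_Fq q I v \<Longrightarrow> (\<And>i. i \<in> I \<Longrightarrow> c i \<in> K) \<Longrightarrow> (\<Sum>i\<in>I. c i * v i) = 0
    \<Longrightarrow> i \<in> I \<Longrightarrow> c i = 0"
  by (auto simp: lin_indep_Fq_def K_def)

lemma lin_indep_FqI:
  "(\<And>c. (\<And>i. i \<in> I \<Longrightarrow> c i \<in> K) \<Longrightarrow> (\<Sum>i\<in>I. c i * v i) = 0 \<Longrightarrow> \<forall>i\<in>I. c i = 0)
    \<Longrightarrow> lin_indep_Fq q I v"
  by (auto simp: lin_indep_Fq_def K_def)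

lemma K_span_cong:
  assumes "\<And>i. i \<in> I \<Longrightarrow> v i = w i"
  shows "K_span v I = K_span w I"
proof -
  have "(\<Sum>i\<in>I. c i * v i) = (\<Sum>i\<in>I. c i * w i)" for c using assms by (intro sum.cong) auto
  then show ?thesis by (simp add: K_span_def)
qed

lemma K_span_mem:
  assumes "finite I" and "j \<in> I"
  shows "v j \<in> K_span v I"
proof -
  have "(\<Sum>i\<in>I. (if i = j then 1 else 0) * v i) = (\<Sum>i\<in>I. if i = j then v j else 0)"
    by (intro sum.cong) auto
  also have "\<dots> = v j" using assms by simp
  finally have "(\<Sum>i\<in>I. (if i = j then 1 else 0) * v i) = v j" .
  then show ?thesis
    unfolding K_span_def by (intro CollectI exI[of _ "\<lambda>i. if i = j then 1 else 0"]) auto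
qed

lemma K_subspace_sum:
  assumes "K_subspace V" and "\<And>i. i \<in> I \<Longrightarrow> c i \<in> K" and "\<And>i. i \<in> I \<Longrightarrow> v i \<in> V"
  shows "(\<Sum>i\<in>I. c i * v i) \<in> V"
  using assms(2,3)
  by (induction I rule: infinite_finite_induct) (use assms(1) in \<open>auto simp: K_subspace_def\<close>)

lemma K_span_subset:
  "K_subspace V \<Longrightarrow> (\<And>i. i \<in> I \<Longrightarrow> v i \<in> V) \<Longrightarrow> K_span v I \<subseteq> V"
  by (auto simp: K_span_def intro!: K_subspace_sum)

lemma K_subspace_K_span: "K_subspace (K_span v I)"
  unfolding K_subspace_def
proof (intro conjI ballI)
  show "0 \<in> K_span v I"
    unfolding K_span_def by (intro CollectI exI[of _ "\<lambda>_. 0"]) auto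
  fix c x y assume c: "c \<in> K" and "x \<in> K_span v I" "y \<in> K_span v I"
  then obtain a b where a: "\<forall>i\<in>I. a i \<in> K" "x = (\<Sum>i\<in>I. a i * v i)"
    and b: "\<forall>i\<in>I. b i \<in> K" "y = (\<Sum>i\<in>I. b i * v i)"
    by (auto simp: K_span_def)
  then have "c * x + y = (\<Sum>i\<in>I. (c * a i + b i) * v i)"
    by (simp add: sum_distrib_left sum.distrib distrib_right mult.assoc)
  moreover have "\<forall>i\<in>I. c * a i + b i \<in> K" using a b c K_add K_mult by blast
  ultimately show "c * x + y \<in> K_span v I"
    unfolding K_span_def mem_Collect_eq by (intro exI[of _ "\<lambda>i. c * a i + b i"] conjI)
qed

lemma K_subspace_lin_poly_roots: "K_subspace {x. lin_poly_eval q d c x = 0}"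
  by (auto simp: K_subspace_def lin_poly_eval_add lin_poly_eval_K_mult lin_poly_eval_0)

lemma card_K_span:
  assumes "finite I" and indep: "lin_indep_Fq q I v"
  shows "card (K_span v I) = q ^ card I"
proof -
  let ?comb = "\<lambda>c. \<Sum>i\<in>I. c i * v i"
  have span: "K_span v I = ?comb ` (PiE I (\<lambda>_. K))"
  proof
    show "K_span v I \<subseteq> ?comb ` (PiE I (\<lambda>_. K))"
    proof
      fix x assume "x \<in> K_span v I"
      then obtain c where "\<forall>i\<in>I. c i \<in> K" "x = ?comb c" by (auto simp: K_span_def)
      then show "x \<in> ?comb ` (PiE I (\<lambda>_. K))" by (intro image_eqI[of _ _ "restrict c I"]) auto
    qed
  qed (auto simp: K_span_def)
  have "inj_on ?comb (PiE I (\<lambda>_. K))"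
  proof (rule inj_onI)
    fix c d assume c: "c \<in> PiE I (\<lambda>_. K)" and d: "d \<in> PiE I (\<lambda>_. K)" and "?comb c = ?comb d"
    then have "(\<Sum>i\<in>I. (c i - d i) * v i) = 0" by (simp add: left_diff_distrib sum_subtractf)
    then have "c i - d i = 0" if "i \<in> I" for i
      using c d that by (intro lin_indep_FqD[OF indep, of "\<lambda>i. c i - d i"]) (auto intro: K_diff)
    then show "c = d" using c d by (intro PiE_ext) auto
  qed
  then show ?thesis using assms(1) by (simp add: span card_image card_PiE card_K)
qed

lemma lin_indep_Fq_SucD:
  assumes indep: "lin_indep_Fq q {..<Suc t} w"
  shows "lin_indep_Fq q {..<t} w \<and> w t \<notin> K_span w {..<t}"
proof
  show "lin_indep_Fq q {..<t} w"
  proof (rule lin_indep_FqI)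
    fix c assume c: "\<And>i. i \<in> {..<t} \<Longrightarrow> c i \<in> K" and sum: "(\<Sum>i<t. c i * w i) = 0"
    have "(\<Sum>j<Suc t. (c(t := 0)) j * w j) = 0"
      unfolding sum_lessThan_Suc_fun_upd using sum by simp
    moreover have "(c(t := 0)) i \<in> K" if "i < Suc t" for i
      using c that by (auto simp: less_Suc_eq)
    ultimately have "(c(t := 0)) i = 0" if "i < t" for i
      using that lin_indep_FqD[OF indep, of "c(t := 0)" i] by simp
    then show "\<forall>i\<in>{..<t}. c i = 0" by auto
  qed
  show "w t \<notin> K_span w {..<t}"
  proof
    assume "w t \<in> K_span w {..<t}"
    then obtain c where c: "\<forall>i<t. c i \<in> K" and wt: "w t = (\<Sum>i<t. c i * w i)"
      by (auto simp: K_span_def)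
    have "(\<Sum>j<Suc t. (c(t := -1)) j * w j) = 0"
      unfolding sum_lessThan_Suc_fun_upd using wt by simp
    moreover have "(c(t := -1)) i \<in> K" if "i < Suc t" for i
      using c that K_minus[OF K_1] by (auto simp: less_Suc_eq)
    ultimately have "(c(t := -1)) t = 0"
      using lin_indep_FqD[OF indep, of "c(t := -1)" t] by simp
    then show False by simp
  qed
qed

lemma lin_indep_Fq_SucI:
  assumes indep: "lin_indep_Fq q {..<t} w" and new: "w t \<notin> K_span w {..<t}"
  shows "lin_indep_Fq q {..<Suc t} w"
proof (rule lin_indep_FqI)
  fix c assume c: "\<And>i. i \<in> {..<Suc t} \<Longrightarrow> c i \<in> K" and sum: "(\<Sum>i<Suc t. c i * w i) = 0"
  have "c t = 0"
  proof (rule ccontr)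
    assume "c t \<noteq> 0"
    have ct_wt: "c t * w t = - (\<Sum>i<t. c i * w i)"
      using sum by (simp add: eq_neg_iff_add_eq_0 add.commute)
    have "w t = c t * w t / c t" using \<open>c t \<noteq> 0\<close> by simp
    then have "w t = - (\<Sum>i<t. c i * w i) / c t" by (simp only: ct_wt)
    then have "w t = (\<Sum>i<t. (- c i / c t) * w i)"
      by (simp add: sum_divide_distrib sum_negf[symmetric] del: sum_negf)
    moreover have "\<forall>i<t. - c i / c t \<in> K" by (auto intro!: K_divide K_minus c)
    ultimately have "w t \<in> K_span w {..<t}"
      unfolding K_span_def mem_Collect_eq by (intro exI[of _ "\<lambda>i. - c i / c t"]) auto
    then show False using new by contradiction
  qed
  with sum have "(\<Sum>i<t. c i * w i) = 0" by simp
  moreover have "c i \<in> K" if "i \<in> {..<t}" for i using c that by simp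
  ultimately have "c i = 0" if "i < t" for i
    using lin_indep_FqD[OF indep, of c i] that by simp
  then show "\<forall>i\<in>{..<Suc t}. c i = 0" using \<open>c t = 0\<close> by (auto simp: less_Suc_eq)
qed

lemma lin_indep_Fq_Suc:
  "lin_indep_Fq q {..<Suc t} w \<longleftrightarrow> lin_indep_Fq q {..<t} w \<and> w t \<notin> K_span w {..<t}"
  using lin_indep_Fq_SucD lin_indep_Fq_SucI by blast

lemma lin_indep_card_le:
  assumes "finite J" and "lin_indep_Fq q J w" and "\<And>j. j \<in> J \<Longrightarrow> w j \<in> K_span v I"
    and "finite I" and "lin_indep_Fq q I v"
  shows "card J \<le> card I"
proof -
  have "K_span w J \<subseteq> K_span v I"
    by (rule K_span_subset[OF K_subspace_K_span]) (rule assms(3))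
  then have "card (K_span w J) \<le> card (K_span v I)" by (intro card_mono) auto
  then have "q ^ card J \<le> q ^ card I" using assms by (simp add: card_K_span)
  then show ?thesis using q_ge_2 by simp
qed

lemma lin_poly_coeffs_eq_0:
  fixes u c :: "nat \<Rightarrow> 'a"
  assumes indep: "lin_indep_Fq q {..<t} u" and roots: "\<And>j. j < t \<Longrightarrow> lin_poly_eval q d c (u j) = 0"
    and "d \<le> t" and "i < d"
  shows "c i = 0"
proof (rule ccontr)
  assume "c i \<noteq> 0"
  have "K_span u {..<t} \<subseteq> {x. lin_poly_eval q d c x = 0}"
    by (rule K_span_subset[OF K_subspace_lin_poly_roots]) (simp add: roots)
  then have "card (K_span u {..<t}) \<le> card {x. lin_poly_eval q d c x = 0}" by (intro card_mono) auto
  also have "\<dots> \<le> q ^ (d - 1)" by (rule card_lin_poly_roots_le[OF q_ge_2, of i]) fact+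
  finally have "q ^ t \<le> q ^ (d - 1)" using card_K_span[OF _ indep] by simp
  then show False using q_ge_2 \<open>d \<le> t\<close> \<open>i < d\<close> by simp
qed

definition indep_tuples :: "nat \<Rightarrow> 'a set \<Rightarrow> (nat \<Rightarrow> 'a) set" where
  "indep_tuples t V = {u \<in> words t. (\<forall>i<t. u i \<in> V) \<and> lin_indep_Fq q {..<t} u}"

lemma card_words: "card (words t :: (nat \<Rightarrow> 'a) set) = (q ^ m) ^ t"
proof -
  have "inj_on (\<lambda>u i. if i < t then u i else (0 :: 'a)) (PiE {..<t} (\<lambda>_. UNIV))"
  proof (rule inj_onI)
    fix u v :: "nat \<Rightarrow> 'a"
    assume u: "u \<in> PiE {..<t} (\<lambda>_. UNIV)" and v: "v \<in> PiE {..<t} (\<lambda>_. UNIV)"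
      and eq: "(\<lambda>i. if i < t then u i else 0) = (\<lambda>i. if i < t then v i else 0)"
    show "u = v"
    proof (rule PiE_ext[OF u v])
      fix i assume "i \<in> {..<t}"
      then show "u i = v i" using fun_cong[OF eq, of i] by simp
    qed
  qed
  then show ?thesis
    unfolding words_eq_image by (simp add: card_image card_PiE card_UNIV)
qed

lemma finite_indep_tuples: "finite (indep_tuples t V)"
  by (rule finite_subset[OF _ finite_words[of t]]) (auto simp: indep_tuples_def)

lemma indep_tuples_Suc:
  "indep_tuples (Suc t) V = (\<lambda>(u, x). u(t := x)) ` (SIGMA u:indep_tuples t V. V - K_span u {..<t})"
  (is "?lhs = ?ext ` ?S")
proof
  show "?lhs \<subseteq> ?ext ` ?S"
  proof
    fix w assume w: "w \<in> ?lhs"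
    define u where "u = w(t := 0)"
    have "lin_indep_Fq q {..<t} u = lin_indep_Fq q {..<t} w"
      by (rule lin_indep_Fq_cong) (simp add: u_def)
    moreover have "K_span u {..<t} = K_span w {..<t}"
      by (rule K_span_cong) (simp add: u_def)
    moreover have "lin_indep_Fq q {..<t} w \<and> w t \<notin> K_span w {..<t}"
      using w lin_indep_Fq_Suc by (simp add: indep_tuples_def)
    ultimately have "lin_indep_Fq q {..<t} u \<and> w t \<notin> K_span u {..<t}" by simp
    with w have "(u, w t) \<in> ?S"
      by (auto simp: indep_tuples_def words_def u_def)
    then show "w \<in> ?ext ` ?S" by (intro image_eqI[of _ _ "(u, w t)"]) (auto simp: u_def)
  qed
  show "?ext ` ?S \<subseteq> ?lhs"
  proof
    fix w assume "w \<in> ?ext ` ?S"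
    then obtain u x where ux: "(u, x) \<in> ?S" and w: "w = u(t := x)" by auto
    have "lin_indep_Fq q {..<t} w = lin_indep_Fq q {..<t} u"
      by (rule lin_indep_Fq_cong) (simp add: w)
    moreover have "K_span w {..<t} = K_span u {..<t}"
      by (rule K_span_cong) (simp add: w)
    ultimately have "lin_indep_Fq q {..<t} w \<and> w t \<notin> K_span w {..<t}"
      using ux by (simp add: indep_tuples_def w)
    with ux show "w \<in> ?lhs"
      using lin_indep_Fq_Suc by (auto simp: indep_tuples_def words_def w less_Suc_eq)
  qed
qed

lemma card_indep_tuples:
  assumes "K_subspace V"
  shows "card (indep_tuples t V) = (\<Prod>i<t. card V - q ^ i)"
proof (induction t)
  case 0
  have "indep_tuples 0 V = {\<lambda>_. 0}"
    by (auto simp: indep_tuples_def words_def lin_indep_Fq_def)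
  then show ?case by simp
next
  case (Suc t)
  let ?S = "SIGMA u:indep_tuples t V. V - K_span u {..<t}"
  have "inj_on (\<lambda>(u, x). u(t := x)) ?S"
  proof (rule inj_onI, clarify)
    fix u x u' x'
    assume "u \<in> indep_tuples t V" "u' \<in> indep_tuples t V" and eq: "u(t := x) = u'(t := x')"
    then have "u t = 0" "u' t = 0" by (auto simp: indep_tuples_def words_def)
    with eq show "u = u' \<and> x = x'" by (metis fun_upd_idem fun_upd_same fun_upd_upd)
  qed
  then have "card (indep_tuples (Suc t) V) = card ?S"
    by (simp add: indep_tuples_Suc card_image)
  also have "\<dots> = (\<Sum>u\<in>indep_tuples t V. card (V - K_span u {..<t}))"
    using finite_indep_tuples by (intro card_SigmaI) auto
  also have "\<dots> = (\<Sum>u\<in>indep_tuples t V. card V - q ^ t)"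
  proof (rule sum.cong[OF refl])
    fix u assume u: "u \<in> indep_tuples t V"
    then have "K_span u {..<t} \<subseteq> V"
      by (intro K_span_subset[OF assms]) (auto simp: indep_tuples_def)
    moreover have "card (K_span u {..<t}) = q ^ t"
      using u card_K_span[of "{..<t}" u] by (simp add: indep_tuples_def)
    ultimately show "card (V - K_span u {..<t}) = card V - q ^ t"
      by (simp add: card_Diff_subset finite_subset)
  qed
  finally show ?case using Suc by simp
qed

section \<open>Subspace polynomials and the list size\<close>

definition monic_lin_poly :: "(nat \<Rightarrow> 'a) \<Rightarrow> nat \<Rightarrow> 'a \<Rightarrow> 'a" where
  "monic_lin_poly p s x = lin_poly_eval q s p x + frob q s x"

lemma monic_lin_poly_eq: "monic_lin_poly p s x = lin_poly_eval q (Suc s) (p(s := 1)) x"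
proof -
  have "lin_poly_eval q s (p(s := 1)) x = lin_poly_eval q s p x"
    unfolding lin_poly_eval_def by (intro sum.cong) auto
  then show ?thesis by (simp add: monic_lin_poly_def lin_poly_eval_Suc)
qed

lemma ex_monic_lin_poly_vanishing:
  assumes indep: "lin_indep_Fq q {..<s} u"
  shows "\<exists>p\<in>words s. \<forall>j<s. monic_lin_poly p s (u j) = 0"
proof -
  define evals where "evals c j = (if j < s then lin_poly_eval q s c (u j) else 0)" for c j
  have "inj_on evals (words s)"
  proof (rule inj_onI)
    fix c c' assume c: "c \<in> words s" and c': "c' \<in> words s" and eq: "evals c = evals c'"
    have "lin_poly_eval q s (\<lambda>i. c i - c' i) (u j) = 0" if "j < s" for j
      using fun_cong[OF eq, of j] that
      by (simp add: evals_def lin_poly_eval_coeff_diff)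
    then have low: "c i - c' i = 0" if "i < s" for i
      using lin_poly_coeffs_eq_0[OF indep] that by blast
    show "c = c'"
    proof
      fix i show "c i = c' i"
        using low[of i] c c' by (cases "i < s") (simp_all add: words_def)
    qed
  qed
  moreover have "evals ` words s \<subseteq> words s" by (auto simp: evals_def words_def)
  ultimately have "evals ` words s = words s" by (intro endo_inj_surj finite_words)
  moreover have "(\<lambda>j. if j < s then - frob q s (u j) else 0) \<in> words s" by (simp add: words_def)
  ultimately have "(\<lambda>j. if j < s then - frob q s (u j) else 0) \<in> evals ` words s" by simp
  then obtain p where "p \<in> words s" and p: "(\<lambda>j. if j < s then - frob q s (u j) else 0) = evals p"
    by (rule imageE)
  moreover have "monic_lin_poly p s (u j) = 0" if "j < s" for j
    using fun_cong[OF p[symmetric], of j] that by (simp add: evals_def monic_lin_poly_def)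
  ultimately show ?thesis by blast
qed

lemma lin_indep_Fq_extend_kernel:
  fixes u v c :: "nat \<Rightarrow> 'a"
  assumes u: "lin_indep_Fq q {..<s} u" and kernel: "\<And>j. j < s \<Longrightarrow> lin_poly_eval q d c (u j) = 0"
    and image: "lin_indep_Fq q S (\<lambda>j. lin_poly_eval q d c (v j))" and "finite S"
  shows "lin_indep_Fq q ({..<s} \<union> (\<lambda>j. j + s) ` S) (\<lambda>i. if i < s then u i else v (i - s))"
    (is "lin_indep_Fq q ?J ?z")
proof (rule lin_indep_FqI)
  let ?L = "lin_poly_eval q d c"
  fix a assume a: "\<And>i. i \<in> ?J \<Longrightarrow> a i \<in> K" and sum: "(\<Sum>i\<in>?J. a i * ?z i) = 0"
  have disj: "{..<s} \<inter> (\<lambda>j. j + s) ` S = {}" and inj: "inj_on (\<lambda>j. j + s) S"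
    by (auto simp: inj_on_def)
  have split: "(\<Sum>i\<in>?J. f i) = (\<Sum>i<s. f i) + (\<Sum>j\<in>S. f (j + s))" for f :: "nat \<Rightarrow> 'a"
    using \<open>finite S\<close> by (simp add: sum.union_disjoint[OF _ _ disj] sum.reindex[OF inj])
  have a_low: "a i \<in> K" if "i < s" for i using that by (intro a) simp
  have a_high: "a (j + s) \<in> K" if "j \<in> S" for j using that by (intro a) simp
  have "(\<Sum>j\<in>S. a (j + s) * ?L (v j)) = (\<Sum>i\<in>?J. a i * ?L (?z i))"
    by (simp add: split kernel)
  also have "\<dots> = ?L (\<Sum>i\<in>?J. a i * ?z i)"
    by (rule lin_poly_eval_K_comb[symmetric]) (rule a)
  finally have "(\<Sum>j\<in>S. a (j + s) * ?L (v j)) = 0" by (simp add: sum lin_poly_eval_0)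
  then have high: "a (j + s) = 0" if "j \<in> S" for j
    using lin_indep_FqD[OF image, of "\<lambda>j. a (j + s)" j] a_high that by simp
  then have "(\<Sum>i<s. a i * u i) = 0" using sum by (simp add: split)
  then have low: "a i = 0" if "i < s" for i
    using lin_indep_FqD[OF u, of a i] a_low that by simp
  show "\<forall>i\<in>?J. a i = 0" using low high by blast
qed

lemma rank_q_lin_poly_le:
  fixes \<alpha> u c w :: "nat \<Rightarrow> 'a"
  assumes \<alpha>: "lin_indep_Fq q {..<n} \<alpha>" and u: "u \<in> indep_tuples s (K_span \<alpha> {..<n})"
    and kernel: "\<And>j. j < s \<Longrightarrow> lin_poly_eval q d c (u j) = 0"
    and w: "\<And>j. j < n \<Longrightarrow> w j = lin_poly_eval q d c (\<alpha> j)"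
  shows "rank_q q n w \<le> n - s"
proof (rule rank_q_le)
  fix S assume S: "S \<subseteq> {..<n}" and indep: "lin_indep_Fq q S w"
  let ?J = "{..<s} \<union> (\<lambda>j. j + s) ` S" and ?z = "\<lambda>i. if i < s then u i else \<alpha> (i - s)"
  have "finite S" using S finite_subset by blast
  have "lin_indep_Fq q S w = lin_indep_Fq q S (\<lambda>j. lin_poly_eval q d c (\<alpha> j))"
  proof (rule lin_indep_Fq_cong)
    fix j assume "j \<in> S"
    then show "w j = lin_poly_eval q d c (\<alpha> j)" using S w by blast
  qed
  with indep have image: "lin_indep_Fq q S (\<lambda>j. lin_poly_eval q d c (\<alpha> j))" by simp
  have "lin_indep_Fq q {..<s} u" using u by (simp add: indep_tuples_def)
  from lin_indep_Fq_extend_kernel[OF this kernel image \<open>finite S\<close>]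
  have indep_J: "lin_indep_Fq q ?J ?z" .
  have span_J: "?z i \<in> K_span \<alpha> {..<n}" if "i \<in> ?J" for i
  proof (cases "i < s")
    case True
    then show ?thesis using u by (simp add: indep_tuples_def)
  next
    case False
    then have "i - s \<in> {..<n}" using that S by auto
    then show ?thesis using False K_span_mem[of "{..<n}" "i - s" \<alpha>] by simp
  qed
  have "card ?J \<le> card {..<n}"
    by (rule lin_indep_card_le[OF _ indep_J span_J _ \<alpha>]) (simp_all add: \<open>finite S\<close>)
  moreover have "card ?J = s + card S"
  proof -
    have "{..<s} \<inter> (\<lambda>j. j + s) ` S = {}" and "inj_on (\<lambda>j. j + s) S"
      by (auto simp: inj_on_def)
    then show ?thesis using \<open>finite S\<close> by (simp add: card_Un_disjoint card_image)
  qed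
  ultimately show "card S \<le> n - s" by simp
qed

definition annihilators :: "nat \<Rightarrow> 'a set \<Rightarrow> (nat \<Rightarrow> 'a) set" where
  "annihilators s V = {p \<in> words s. \<exists>u\<in>indep_tuples s V. \<forall>j<s. monic_lin_poly p s (u j) = 0}"

lemma card_root_tuples_le:
  "card {u \<in> indep_tuples s V. \<forall>j<s. monic_lin_poly p s (u j) = 0} \<le> (\<Prod>i<s. q ^ s - q ^ i)"
proof -
  define R where "R = {x. lin_poly_eval q (Suc s) (p(s := 1)) x = 0}"
  have "card R \<le> q ^ s"
    using card_lin_poly_roots_le[OF q_ge_2, of s "Suc s" "p(s := 1)"] by (simp add: R_def)
  have "{u \<in> indep_tuples s V. \<forall>j<s. monic_lin_poly p s (u j) = 0} \<subseteq> indep_tuples s R"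
    by (auto simp: indep_tuples_def R_def monic_lin_poly_eq)
  then have "card {u \<in> indep_tuples s V. \<forall>j<s. monic_lin_poly p s (u j) = 0} \<le> card (indep_tuples s R)"
    by (intro card_mono finite_indep_tuples)
  also have "\<dots> = (\<Prod>i<s. card R - q ^ i)"
    unfolding R_def by (rule card_indep_tuples[OF K_subspace_lin_poly_roots])
  also have "\<dots> \<le> (\<Prod>i<s. q ^ s - q ^ i)"
    using \<open>card R \<le> q ^ s\<close> by (intro prod_mono) simp
  finally show ?thesis .
qed

lemma gauss_binom_le_card_annihilators:
  assumes \<alpha>: "lin_indep_Fq q {..<n} \<alpha>" and "s \<le> n"
  shows "gauss_binom q n s \<le> card (annihilators s (K_span \<alpha> {..<n}))"
proof (rule gauss_binom_le_of_prod_le[OF q_ge_2 \<open>s \<le> n\<close>])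
  let ?V = "K_span \<alpha> {..<n}" and ?A = "annihilators s (K_span \<alpha> {..<n})"
  let ?roots = "\<lambda>p. {u \<in> indep_tuples s ?V. \<forall>j<s. monic_lin_poly p s (u j) = 0}"
  have "finite ?A" by (rule finite_subset[OF _ finite_words[of s]]) (auto simp: annihilators_def)
  have "indep_tuples s ?V \<subseteq> (\<Union>p\<in>?A. ?roots p)"
  proof
    fix u assume u: "u \<in> indep_tuples s ?V"
    then have "lin_indep_Fq q {..<s} u" by (simp add: indep_tuples_def)
    then obtain p where "p \<in> words s" "\<forall>j<s. monic_lin_poly p s (u j) = 0"
      using ex_monic_lin_poly_vanishing by blast
    with u show "u \<in> (\<Union>p\<in>?A. ?roots p)" by (auto simp: annihilators_def)
  qed
  then have "card (indep_tuples s ?V) \<le> card (\<Union>p\<in>?A. ?roots p)"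
    using \<open>finite ?A\<close> finite_indep_tuples by (intro card_mono) auto
  also have "\<dots> \<le> (\<Sum>p\<in>?A. card (?roots p))" using \<open>finite ?A\<close> by (rule card_UN_le)
  also have "\<dots> \<le> (\<Sum>p\<in>?A. \<Prod>i<s. q ^ s - q ^ i)" by (intro sum_mono card_root_tuples_le)
  finally show "(\<Prod>i<s. q ^ n - q ^ i) \<le> card ?A * (\<Prod>i<s. q ^ s - q ^ i)"
    using \<alpha> by (simp add: card_indep_tuples[OF K_subspace_K_span] card_K_span)
qed

text \<open>The center r makes P(alpha_j) = f(alpha_j) - r_j, where f is the low part of P
  (coefficients below k) and h are its coefficients from k on.\<close>

lemma low_part_in_ball:
  fixes \<alpha> h p :: "nat \<Rightarrow> 'a"
  assumes \<alpha>: "lin_indep_Fq q {..<n} \<alpha>" and "k \<le> s"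
    and p: "p \<in> annihilators s (K_span \<alpha> {..<n})" and high: "\<And>i. p (i + k) = h i"
  shows "(\<lambda>j. if j < n then lin_poly_eval q k p (\<alpha> j) else 0) \<in> rank_ball q n (n - s)
           (\<lambda>j. if j < n then - (lin_poly_eval q s (\<lambda>i. if k \<le> i then h (i - k) else 0) (\<alpha> j)
                                + frob q s (\<alpha> j)) else 0)"
    (is "?f \<in> rank_ball q n (n - s) ?r")
proof -
  obtain u where u: "u \<in> indep_tuples s (K_span \<alpha> {..<n})"
    and kernel: "\<And>j. j < s \<Longrightarrow> lin_poly_eval q (Suc s) (p(s := 1)) (u j) = 0"
    using p by (auto simp: annihilators_def monic_lin_poly_eq)
  have "(\<lambda>i. if k \<le> i then p i else 0) = (\<lambda>i. if k \<le> i then h (i - k) else 0)"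
  proof
    fix i show "(if k \<le> i then p i else 0) = (if k \<le> i then h (i - k) else 0)"
      using high[of "i - k"] by (cases "k \<le> i") simp_all
  qed
  then have "(?f - ?r) j = lin_poly_eval q (Suc s) (p(s := 1)) (\<alpha> j)" if "j < n" for j
    using that lin_poly_eval_split[OF \<open>k \<le> s\<close>, where p = p and x = "\<alpha> j"]
    by (simp add: monic_lin_poly_def flip: monic_lin_poly_eq)
  then have "rank_q q n (?f - ?r) \<le> n - s"
    using rank_q_lin_poly_le[OF \<alpha> u kernel] by blast
  then show ?thesis by (simp add: rank_ball_def words_def)
qed

lemma coeffs_eq_if_low_part_evals_eq:
  fixes \<alpha> p p' :: "nat \<Rightarrow> 'a"
  assumes \<alpha>: "lin_indep_Fq q {..<n} \<alpha>" and "k \<le> n"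
    and high: "\<And>i. p (i + k) = p' (i + k)"
    and low: "\<And>j. j < n \<Longrightarrow> lin_poly_eval q k p (\<alpha> j) = lin_poly_eval q k p' (\<alpha> j)"
  shows "p = p'"
proof
  have roots: "lin_poly_eval q k (\<lambda>i. p i - p' i) (\<alpha> j) = 0" if "j < n" for j
    using low[OF that] by (simp add: lin_poly_eval_coeff_diff)
  have "p i - p' i = 0" if "i < k" for i
    using \<open>k \<le> n\<close> that by (intro lin_poly_coeffs_eq_0[OF \<alpha> roots]) auto
  then show "p i = p' i" for i
    using high[of "i - k"] by (cases "i < k") simp_all
qed

lemma card_annihilator_fiber_le_ball:
  fixes \<alpha> h :: "nat \<Rightarrow> 'a"
  assumes \<alpha>: "lin_indep_Fq q {..<n} \<alpha>" and "k \<le> s" and "s \<le> n"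
  shows "\<exists>r\<in>words n. card {p \<in> annihilators s (K_span \<alpha> {..<n}). (\<lambda>i. p (i + k)) = h}
           \<le> card (rank_ball q n (n - s) r \<inter> gabidulin q n k \<alpha>)"
proof
  let ?F = "{p \<in> annihilators s (K_span \<alpha> {..<n}). (\<lambda>i. p (i + k)) = h}"
  define r where "r j = (if j < n then - (lin_poly_eval q s (\<lambda>i. if k \<le> i then h (i - k) else 0) (\<alpha> j)
                                        + frob q s (\<alpha> j)) else 0)" for j
  define codeword where "codeword p = (\<lambda>j. if j < n then lin_poly_eval q k p (\<alpha> j) else 0)" for p
  show "r \<in> words n" by (simp add: r_def words_def)
  have "codeword p \<in> rank_ball q n (n - s) r" if "p \<in> ?F" for p
  proof -
    from that have "p \<in> annihilators s (K_span \<alpha> {..<n})" and "\<And>i. p (i + k) = h i" by auto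
    from low_part_in_ball[OF \<alpha> \<open>k \<le> s\<close> this] show ?thesis
      by (simp add: codeword_def r_def[abs_def])
  qed
  then have "codeword ` ?F \<subseteq> rank_ball q n (n - s) r" by blast
  moreover have "codeword ` ?F \<subseteq> gabidulin q n k \<alpha>"
    by (auto simp: codeword_def gabidulin_def)
  moreover have "inj_on codeword ?F"
  proof (rule inj_onI)
    fix p p' assume p: "p \<in> ?F" and p': "p' \<in> ?F" and eq: "codeword p = codeword p'"
    have "k \<le> n" using \<open>k \<le> s\<close> \<open>s \<le> n\<close> by simp
    moreover have "p (i + k) = p' (i + k)" for i
      using p p' by (metis (mono_tags, lifting) mem_Collect_eq)
    moreover have "lin_poly_eval q k p (\<alpha> j) = lin_poly_eval q k p' (\<alpha> j)" if "j < n" for j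
      using fun_cong[OF eq, of j] that by (simp add: codeword_def)
    ultimately show "p = p'" by (rule coeffs_eq_if_low_part_evals_eq[OF \<alpha>])
  qed
  moreover have "finite (rank_ball q n (n - s) r \<inter> gabidulin q n k \<alpha>)"
    by (rule finite_subset[OF _ finite_words[of n]]) (auto simp: rank_ball_def)
  ultimately show "card ?F \<le> card (rank_ball q n (n - s) r \<inter> gabidulin q n k \<alpha>)"
    by (meson card_inj_on_le le_infI)
qed

lemma ex_ball_codewords_ge:
  fixes \<alpha> :: "nat \<Rightarrow> 'a"
  assumes \<alpha>: "lin_indep_Fq q {..<n} \<alpha>" and "k \<le> s" and "s \<le> n"
  shows "\<exists>r\<in>words n. gauss_binom q n s / (real q ^ m) ^ (s - k)
           \<le> real (card (rank_ball q n (n - s) r \<inter> gabidulin q n k \<alpha>))"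
proof -
  let ?A = "annihilators s (K_span \<alpha> {..<n})"
  have "(\<lambda>p i. p (i + k)) ` ?A \<subseteq> words (s - k)"
    by (auto simp: annihilators_def words_def)
  from ex_large_fiber[OF finite_words this] obtain h
    where h: "card ?A \<le> card (words (s - k) :: (nat \<Rightarrow> 'a) set) * card {p \<in> ?A. (\<lambda>i. p (i + k)) = h}" ..
  from card_annihilator_fiber_le_ball[OF \<alpha> \<open>k \<le> s\<close> \<open>s \<le> n\<close>, where h = h] obtain r
    where r: "r \<in> words n"
    and fiber: "card {p \<in> ?A. (\<lambda>i. p (i + k)) = h} \<le> card (rank_ball q n (n - s) r \<inter> gabidulin q n k \<alpha>)" ..
  let ?B = "card (rank_ball q n (n - s) r \<inter> gabidulin q n k \<alpha>)"
  have "card ?A \<le> (q ^ m) ^ (s - k) * card {p \<in> ?A. (\<lambda>i. p (i + k)) = h}"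
    using h by (simp only: card_words)
  also have "\<dots> \<le> (q ^ m) ^ (s - k) * ?B" using fiber by (rule mult_le_mono2)
  finally have "real (card ?A) \<le> (real q ^ m) ^ (s - k) * real ?B"
    by (metis of_nat_le_iff of_nat_mult of_nat_power)
  with gauss_binom_le_card_annihilators[OF \<alpha> \<open>s \<le> n\<close>]
  have "gauss_binom q n s \<le> real ?B * (real q ^ m) ^ (s - k)" by (simp add: mult.commute)
  moreover have "(real q ^ m) ^ (s - k) > 0" using q_ge_2 by simp
  ultimately have "gauss_binom q n s / (real q ^ m) ^ (s - k) \<le> real ?B"
    by (simp add: pos_divide_le_eq)
  with r show ?thesis by blast
qed

end

theorem theorem1:
  fixes q m n k \<tau> :: nat and \<alpha> :: "nat \<Rightarrow> 'a::{finite,field}"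
  assumes "\<exists>p e. prime p \<and> e \<ge> 1 \<and> q = p ^ e"
    and "card (UNIV :: 'a set) = q ^ m"
    and "n \<le> m" and "1 \<le> k" and "k \<le> n"
    and "lin_indep_Fq q {..<n} \<alpha>"
    and "\<tau> < n - k + 1"
  shows "let d = n - k + 1;
             L = Max ((\<lambda>r'. card (rank_ball q n \<tau> r' \<inter> gabidulin q n k \<alpha>)) ` words n)
         in (\<exists>r \<in> words n.
               real L \<ge> real (card (rank_ball q n \<tau> r \<inter> gabidulin q n k \<alpha>))
             \<and> real (card (rank_ball q n \<tau> r \<inter> gabidulin q n k \<alpha>))
                 \<ge> gauss_binom q n (n - \<tau>) / (real q ^ m) ^ (n - \<tau> - k)
             \<and> gauss_binom q n (n - \<tau>) / (real q ^ m) ^ (n - \<tau> - k)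
                 \<ge> real q ^ m * real q powi (int \<tau> * (int m + int n) - int \<tau> ^ 2 - int m * int d))
            \<and> (n = m \<longrightarrow> real L \<ge> real q ^ n * real q powi (2 * int n * int \<tau> - int \<tau> ^ 2 - int n * int d))"
proof -
  interpret Fq_extension q m "Fq q :: 'a set"
    using assms(1,2) by unfold_locales auto
  let ?ball = "\<lambda>r. card (rank_ball q n \<tau> r \<inter> gabidulin q n k \<alpha>)"
  let ?L = "Max (?ball ` words n)"
  let ?bound = "real q ^ m * real q powi (int \<tau> * (int m + int n) - int \<tau> ^ 2 - int m * int (n - k + 1))"
  have "k \<le> n - \<tau>" and "n - (n - \<tau>) = \<tau>" using assms(5,7) by linarith+
  obtain r where r: "r \<in> words n"
    and ball: "gauss_binom q n (n - \<tau>) / (real q ^ m) ^ (n - \<tau> - k) \<le> ?ball r"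
    using ex_ball_codewords_ge[OF assms(6) \<open>k \<le> n - \<tau>\<close> diff_le_self] \<open>n - (n - \<tau>) = \<tau>\<close>
    by auto
  have "?ball r \<le> ?L" using r finite_words by (intro Max_ge) auto
  moreover have "?bound \<le> gauss_binom q n (n - \<tau>) / (real q ^ m) ^ (n - \<tau> - k)"
    using gauss_quotient_ge_power[OF q_ge_2] assms(5,7) by simp
  moreover have "real q ^ n * real q powi (2 * int n * int \<tau> - int \<tau> ^ 2 - int n * int (n - k + 1))
      = ?bound" if "n = m"
    using that by (simp add: algebra_simps)
  ultimately show ?thesis
    unfolding Let_def using r ball by (smt (verit) of_nat_le_iff)
qed

end
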